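(* Let $k$ be a positive integer and let $M(2k)$ be the perfect matching derangement graph. Then: (1) $M(2k)$ is vertex transitive, and the natural action of $\mathrm{Sym}(2k)$ on perfect matchings (induced by permuting the vertices of $K_{2k}$) gives a subgroup of automorphisms of $M(2k)$ acting transitively on its vertices; (2) the maximum size of a clique in $M(2k)$ is $2k-1$; (3) the maximum size of a coclique (independent set) in $M(2k)$ is $(2k-3)!!$.
   Context: The perfect matching derangement graph $M(2k)$ has as vertices all perfect matchings of the complete graph $K_{2k}$ (sets of $k$ pairwise vertex-disjoint edges), two perfect matchings being adjacent if and only if they have no edge in common. For odd $n$, $n!!=n(n-2)\cdots1$, with $(-1)!!=1$. *)

theory Defs
  imports "HOL-Combinatorics.Permutations"
begin

definition edges_K :: "nat \<Rightarrow> nat set set" where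
  "edges_K n = {e. e \<subseteq> {0..<n} \<and> card e = 2}"

definition perfect_matchings :: "nat \<Rightarrow> nat set set set" where
  "perfect_matchings k = {M. M \<subseteq> edges_K (2*k) \<and> card M = k \<and>
      (\<forall>e\<in>M. \<forall>f\<in>M. e \<noteq> f \<longrightarrow> e \<inter> f = {})}"

definition pm_adj :: "nat set set \<Rightarrow> nat set set \<Rightarrow> bool" where
  "pm_adj M N \<longleftrightarrow> M \<inter> N = {}"

definition pm_clique :: "nat \<Rightarrow> nat set set set \<Rightarrow> bool" where
  "pm_clique k C \<longleftrightarrow> C \<subseteq> perfect_matchings k \<and>
     (\<forall>M\<in>C. \<forall>N\<in>C. M \<noteq> N \<longrightarrow> pm_adj M N)"

definition pm_coclique :: "nat \<Rightarrow> nat set set set \<Rightarrow> bool" where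
  "pm_coclique k C \<longleftrightarrow> C \<subseteq> perfect_matchings k \<and>
     (\<forall>M\<in>C. \<forall>N\<in>C. M \<noteq> N \<longrightarrow> \<not> pm_adj M N)"

definition pm_automorphism :: "nat \<Rightarrow> (nat set set \<Rightarrow> nat set set) \<Rightarrow> bool" where
  "pm_automorphism k f \<longleftrightarrow> bij_betw f (perfect_matchings k) (perfect_matchings k) \<and>
     (\<forall>M\<in>perfect_matchings k. \<forall>N\<in>perfect_matchings k. pm_adj M N \<longleftrightarrow> pm_adj (f M) (f N))"

definition vertex_transitive_pm :: "nat \<Rightarrow> bool" where
  "vertex_transitive_pm k \<longleftrightarrow> (\<forall>M\<in>perfect_matchings k. \<forall>N\<in>perfect_matchings k.
      \<exists>f. pm_automorphism k f \<and> f M = N)"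

definition pm_act :: "(nat \<Rightarrow> nat) \<Rightarrow> nat set set \<Rightarrow> nat set set" where
  "pm_act \<sigma> M = (\<lambda>e. \<sigma> ` e) ` M"

text \<open>Double factorial: n!! = n(n-2)...; dfact 0 = 1 so that (2k-3)!! with
  nat subtraction gives (-1)!! = 1 when k = 1.\<close>
fun dfact :: "nat \<Rightarrow> nat" where
  "dfact 0 = 1"
| "dfact (Suc 0) = 1"
| "dfact (Suc (Suc n)) = Suc (Suc n) * dfact n"

end

theory Submission
  imports Defs "HOL-Number_Theory.Cong"
begin

text \<open>
  Permutations of the vertices act on perfect matchings preserving disjointness, and
  transitively, since two perfect matchings of the same set are related by any bijection
  carrying edges to edges. The round-robin 1-factorisation of \<open>K\<^sub>2\<^sub>k\<close> (colour \<open>i < 2k - 1\<close>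
  pairs \<open>i\<close> with the extra vertex \<open>2k - 1\<close> and \<open>x\<close> with \<open>y\<close> whenever
  \<open>x + y \<equiv> 2i (mod 2k - 1)\<close>) is a clique of size \<open>2k - 1\<close>; no clique is larger, as its
  members use distinct edges at a fixed vertex. The matchings through a fixed edge form a
  coclique of size \<open>(2k - 3)!!\<close>. For the upper bound: in a graph with a vertex-transitive group of
  automorphisms every image of a clique meets a coclique at most once, and averaging over the
  group gives \<open>|clique| \<cdot> |coclique| \<le> |vertices| = (2k - 1)!!\<close>.
\<close>

section \<open>Clique-coclique bound for transitive permutation actions\<close>

locale transitive_permutation_action =
  fixes V :: "'v set" and P :: "'a set" and act :: "('v \<Rightarrow> 'v) \<Rightarrow> 'a \<Rightarrow> 'a"
  assumes finite_V: "finite V" and finite_P: "finite P"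
    and act_comp: "\<sigma> permutes V \<Longrightarrow> \<tau> permutes V \<Longrightarrow> act (\<sigma> \<circ> \<tau>) x = act \<sigma> (act \<tau> x)"
    and act_id: "act id x = x"
    and act_closed: "\<sigma> permutes V \<Longrightarrow> x \<in> P \<Longrightarrow> act \<sigma> x \<in> P"
    and transitive: "x \<in> P \<Longrightarrow> y \<in> P \<Longrightarrow> \<exists>\<sigma>. \<sigma> permutes V \<and> act \<sigma> x = y"
begin

definition transporter :: "'a \<Rightarrow> 'a \<Rightarrow> ('v \<Rightarrow> 'v) set" where
  "transporter x y = {\<sigma>. \<sigma> permutes V \<and> act \<sigma> x = y}"

lemma finite_transporter: "finite (transporter x y)"
  using finite_permutations[OF finite_V] by (rule finite_subset[rotated]) (auto simp: transporter_def)

lemma act_inv: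
  assumes "\<sigma> permutes V"
  shows "act (inv \<sigma>) (act \<sigma> x) = x"
proof -
  have "act (inv \<sigma>) (act \<sigma> x) = act (inv \<sigma> \<circ> \<sigma>) x"
    using act_comp[OF permutes_inv[OF assms] assms] by simp
  also have "\<dots> = x"
    using permutes_inv_o(2)[OF assms] act_id by simp
  finally show ?thesis .
qed

lemma act_inj: "\<sigma> permutes V \<Longrightarrow> act \<sigma> x = act \<sigma> y \<Longrightarrow> x = y"
  by (metis act_inv)

lemma card_transporter_le:
  assumes "x \<in> P" "y \<in> P" "x' \<in> P" "y' \<in> P"
  shows "card (transporter x y) \<le> card (transporter x' y')"
proof -
  obtain \<tau> where \<tau>: "\<tau> permutes V" "act \<tau> x' = x"
    using transitive assms(3,1) by blast
  obtain \<rho> where \<rho>: "\<rho> permutes V" "act \<rho> y = y'"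
    using transitive assms(2,4) by blast
  have "inj_on (\<lambda>\<sigma>. \<rho> \<circ> \<sigma> \<circ> \<tau>) (transporter x y)"
  proof (rule inj_onI)
    fix \<sigma> \<sigma>' assume "\<rho> \<circ> \<sigma> \<circ> \<tau> = \<rho> \<circ> \<sigma>' \<circ> \<tau>"
    then have "inv \<rho> \<circ> (\<rho> \<circ> \<sigma> \<circ> \<tau>) \<circ> inv \<tau> = inv \<rho> \<circ> (\<rho> \<circ> \<sigma>' \<circ> \<tau>) \<circ> inv \<tau>"
      by simp
    then show "\<sigma> = \<sigma>'"
      by (simp add: o_assoc permutes_inv_o[OF \<rho>(1)] permutes_inv_o[OF \<tau>(1)])
        (simp add: o_assoc[symmetric] permutes_inv_o[OF \<tau>(1)])
  qed
  moreover have "\<rho> \<circ> \<sigma> \<circ> \<tau> \<in> transporter x' y'" if "\<sigma> \<in> transporter x y" for \<sigma>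
  proof -
    have \<sigma>: "\<sigma> permutes V" "act \<sigma> x = y"
      using that by (simp_all add: transporter_def)
    have "\<rho> \<circ> \<sigma> permutes V"
      using \<sigma>(1) \<rho>(1) by (rule permutes_compose)
    moreover have "act (\<rho> \<circ> \<sigma> \<circ> \<tau>) x' = y'"
      using act_comp[OF \<open>\<rho> \<circ> \<sigma> permutes V\<close> \<tau>(1)] act_comp[OF \<rho>(1) \<sigma>(1)] \<sigma>(2) \<tau>(2) \<rho>(2)
      by simp
    ultimately show ?thesis
      using permutes_compose[OF \<tau>(1) \<open>\<rho> \<circ> \<sigma> permutes V\<close>] by (simp add: transporter_def)
  qed
  then have "(\<lambda>\<sigma>. \<rho> \<circ> \<sigma> \<circ> \<tau>) ` transporter x y \<subseteq> transporter x' y'"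
    by blast
  ultimately show ?thesis
    using finite_transporter by (rule card_inj_on_le)
qed

lemma card_transporter_eq:
  "x \<in> P \<Longrightarrow> y \<in> P \<Longrightarrow> x' \<in> P \<Longrightarrow> y' \<in> P \<Longrightarrow> card (transporter x y) = card (transporter x' y')"
  by (intro le_antisym card_transporter_le)

lemma card_permutations_into:
  assumes "x \<in> P" "T \<subseteq> P"
  shows "card {\<sigma>. \<sigma> permutes V \<and> act \<sigma> x \<in> T} = card T * card (transporter x x)"
proof -
  have "{\<sigma>. \<sigma> permutes V \<and> act \<sigma> x \<in> T} = (\<Union>y\<in>T. transporter x y)"
    by (auto simp: transporter_def)
  moreover have "card (\<Union>y\<in>T. transporter x y) = (\<Sum>y\<in>T. card (transporter x y))"
    using finite_subset[OF assms(2) finite_P] finite_transporter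
    by (intro card_UN_disjoint) (auto simp: transporter_def)
  ultimately have "card {\<sigma>. \<sigma> permutes V \<and> act \<sigma> x \<in> T} = (\<Sum>y\<in>T. card (transporter x y))"
    by simp
  also have "\<dots> = (\<Sum>y\<in>T. card (transporter x x))"
    using assms by (intro sum.cong refl card_transporter_eq) auto
  also have "\<dots> = card T * card (transporter x x)"
    by simp
  finally show ?thesis .
qed

lemma clique_times_coclique_le:
  fixes adj :: "'a \<Rightarrow> 'a \<Rightarrow> bool"
  assumes adj_act: "\<And>\<sigma> x y. \<sigma> permutes V \<Longrightarrow> adj x y \<Longrightarrow> adj (act \<sigma> x) (act \<sigma> y)"
    and clique: "F \<subseteq> P" "\<forall>x\<in>F. \<forall>y\<in>F. x \<noteq> y \<longrightarrow> adj x y"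
    and coclique: "S \<subseteq> P" "\<forall>x\<in>S. \<forall>y\<in>S. x \<noteq> y \<longrightarrow> \<not> adj x y"
  shows "card F * card S \<le> card P"
proof (cases "P = {}")
  case True
  then show ?thesis using clique(1) by simp
next
  case False
  then obtain x0 where "x0 \<in> P" by blast
  define G where "G = {\<sigma>. \<sigma> permutes V}"
  define c where "c = card (transporter x0 x0)"
  have card_into: "card {\<sigma>\<in>G. act \<sigma> x \<in> T} = card T * c" if "x \<in> P" "T \<subseteq> P" for x T
    using card_permutations_into[OF that] card_transporter_eq[OF that(1,1) \<open>x0 \<in> P\<close> \<open>x0 \<in> P\<close>]
    by (simp add: G_def c_def)
  have "c > 0"
    using finite_permutations[OF finite_V] act_id
    by (auto simp: c_def transporter_def card_gt_0_iff permutes_id intro!: exI[of _ id])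
  have at_most_one: "card {x\<in>F. act \<sigma> x \<in> S} \<le> 1" if "\<sigma> \<in> G" for \<sigma>
  proof -
    have "x = y" if "x \<in> F" "y \<in> F" "act \<sigma> x \<in> S" "act \<sigma> y \<in> S" for x y
      using clique(2) coclique(2) adj_act act_inj \<open>\<sigma> \<in> G\<close> that by (metis G_def mem_Collect_eq)
    moreover have "finite {x\<in>F. act \<sigma> x \<in> S}"
      using finite_subset[OF clique(1) finite_P] by simp
    ultimately show ?thesis
      by (auto simp: card_le_Suc0_iff_eq)
  qed
  have "card F * (card S * c) = (\<Sum>x\<in>F. card {\<sigma>\<in>G. act \<sigma> x \<in> S})"
    using card_into clique(1) coclique(1) by (simp add: subset_iff)
  also have "\<dots> = (\<Sum>\<sigma>\<in>G. card {x\<in>F. act \<sigma> x \<in> S})"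
    using finite_permutations[OF finite_V] finite_subset[OF clique(1) finite_P]
    by (intro sum_multicount_gen[symmetric]) (auto simp: G_def)
  also have "\<dots> \<le> card G"
    using sum_mono[OF at_most_one] by simp
  also have "\<dots> = card {\<sigma>\<in>G. act \<sigma> x0 \<in> P}"
    using act_closed[OF _ \<open>x0 \<in> P\<close>] by (intro arg_cong[where f = card]) (auto simp: G_def)
  also have "\<dots> = card P * c"
    using card_into[OF \<open>x0 \<in> P\<close> order_refl] .
  finally show ?thesis
    using \<open>c > 0\<close> by (simp add: mult.assoc)
qed

end

section \<open>Perfect matchings of a finite set\<close>

definition perfect_matchings_on :: "'a set \<Rightarrow> 'a set set set" where
  "perfect_matchings_on V = {M. (\<forall>e\<in>M. e \<subseteq> V \<and> card e = 2) \<and>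
      (\<forall>e\<in>M. \<forall>f\<in>M. e \<noteq> f \<longrightarrow> e \<inter> f = {}) \<and> \<Union>M = V}"

lemma card_Union_matching:
  assumes "\<forall>e\<in>M. card e = 2" and "\<forall>e\<in>M. \<forall>f\<in>M. e \<noteq> f \<longrightarrow> e \<inter> f = {}"
  shows "card (\<Union>M) = 2 * card M"
proof -
  have "card (\<Union>M) = sum card M"
    using assms by (intro card_Union_disjoint) (auto simp: pairwise_def disjnt_def intro: card_ge_0_finite)
  also have "\<dots> = 2 * card M"
    using assms(1) by simp
  finally show ?thesis .
qed

lemma finite_perfect_matchings_on: "finite V \<Longrightarrow> finite (perfect_matchings_on V)"
  by (rule finite_subset[of _ "Pow (Pow V)"]) (auto simp: perfect_matchings_on_def)

lemma card_perfect_matching: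
  "M \<in> perfect_matchings_on V \<Longrightarrow> card V = 2 * card M"
  using card_Union_matching[of M] by (simp add: perfect_matchings_on_def)

lemma perfect_matchings_eq_perfect_matchings_on: "perfect_matchings k = perfect_matchings_on {0..<2*k}"
proof (intro set_eqI iffI)
  fix M assume M: "M \<in> perfect_matchings k"
  then have "card (\<Union>M) = card {0..<2*k}" "\<Union>M \<subseteq> {0..<2*k}"
    using card_Union_matching[of M] by (auto simp: perfect_matchings_def edges_K_def)
  then have "\<Union>M = {0..<2*k}"
    by (simp add: card_subset_eq)
  with M show "M \<in> perfect_matchings_on {0..<2*k}"
    by (auto simp: perfect_matchings_def edges_K_def perfect_matchings_on_def)
next
  fix M assume "M \<in> perfect_matchings_on {0..<2*k}"
  with card_perfect_matching[OF this] show "M \<in> perfect_matchings k"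
    by (auto simp: perfect_matchings_def edges_K_def perfect_matchings_on_def)
qed

lemma perfect_matching_edges_eq:
  "M \<in> perfect_matchings_on V \<Longrightarrow> e \<in> M \<Longrightarrow> f \<in> M \<Longrightarrow> e \<inter> f \<noteq> {} \<Longrightarrow> e = f"
  unfolding perfect_matchings_on_def by blast

lemma perfect_matchings_on_empty: "perfect_matchings_on {} = {{}}"
  by (auto simp: perfect_matchings_on_def)

lemma perfect_matching_remove_edge:
  assumes "M \<in> perfect_matchings_on V" and "e \<in> M"
  shows "M - {e} \<in> perfect_matchings_on (V - e)"
  using assms unfolding perfect_matchings_on_def by (auto 0 3)

lemma perfect_matching_insert_edge:
  assumes "N \<in> perfect_matchings_on (V - e)" and "e \<subseteq> V" and "card e = 2"
  shows "insert e N \<in> perfect_matchings_on V" and "e \<notin> N"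
proof -
  have "e \<noteq> {}" using assms(3) by auto
  then show "e \<notin> N" using assms(1) by (auto simp: perfect_matchings_on_def)
  show "insert e N \<in> perfect_matchings_on V"
    using assms unfolding perfect_matchings_on_def by auto
qed

lemma perfect_matching_partner:
  assumes "M \<in> perfect_matchings_on V" and "a \<in> V"
  shows "\<exists>b\<in>V - {a}. {a, b} \<in> M"
proof -
  obtain e where e: "e \<in> M" "a \<in> e" "e \<subseteq> V" "card e = 2"
    using assms by (auto simp: perfect_matchings_on_def)
  then obtain b where "e = {a, b}" "a \<noteq> b"
    by (metis card_2_iff doubleton_eq_iff insertE singletonD)
  with e show ?thesis by auto
qed

lemma card_perfect_matchings_containing:
  assumes "a \<in> V" "b \<in> V" "a \<noteq> b"
  shows "card {M \<in> perfect_matchings_on V. {a, b} \<in> M} = card (perfect_matchings_on (V - {a, b}))"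
proof (rule bij_betw_same_card[of "\<lambda>M. M - {{a, b}}"], rule bij_betw_byWitness[where f' = "insert {a, b}"])
  show "insert {a, b} ` perfect_matchings_on (V - {a, b}) \<subseteq> {M \<in> perfect_matchings_on V. {a, b} \<in> M}"
    using perfect_matching_insert_edge(1)[of _ V "{a, b}"] assms by auto
  show "\<forall>N\<in>perfect_matchings_on (V - {a, b}). insert {a, b} N - {{a, b}} = N"
    using perfect_matching_insert_edge(2)[of _ V "{a, b}"] assms by auto
qed (use perfect_matching_remove_edge in auto)

lemma dfact_Suc_double: "dfact (Suc (2 * m)) = Suc (2 * m) * dfact (2 * m - 1)"
  by (cases m) auto

lemma card_perfect_matchings_on:
  "finite V \<Longrightarrow> card V = 2 * m \<Longrightarrow> card (perfect_matchings_on V) = dfact (2 * m - 1)"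
proof (induction m arbitrary: V)
  case 0
  then show ?case by (simp add: perfect_matchings_on_empty)
next
  case (Suc m)
  then obtain a where a: "a \<in> V" by fastforce
  let ?P = "\<lambda>b. {M \<in> perfect_matchings_on V. {a, b} \<in> M}"
  have partition: "perfect_matchings_on V = (\<Union>b\<in>V - {a}. ?P b)"
    using perfect_matching_partner[OF _ a] by blast
  have disjoint: "?P b \<inter> ?P c = {}" if "b \<noteq> c" for b c
    using that perfect_matching_edges_eq[of _ V "{a, b}" "{a, c}"] by (auto simp: doubleton_eq_iff)
  have fibre: "card (?P b) = dfact (2 * m - 1)" if "b \<in> V - {a}" for b
  proof -
    have "card {a, b} = 2" using that by auto
    then have "card (V - {a, b}) = 2 * m" using Suc.prems a that by (simp add: card_Diff_subset)
    then show ?thesis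
      using Suc.IH[of "V - {a, b}"] Suc.prems(1) card_perfect_matchings_containing[of a V b] that a
      by auto
  qed
  have "card (\<Union>b\<in>V - {a}. ?P b) = (\<Sum>b\<in>V - {a}. card (?P b))"
    using Suc.prems(1) finite_perfect_matchings_on[OF Suc.prems(1)] disjoint
    by (intro card_UN_disjoint) auto
  then have "card (perfect_matchings_on V) = (\<Sum>b\<in>V - {a}. dfact (2 * m - 1))"
    using partition fibre by simp
  then show ?case using Suc.prems a dfact_Suc_double by simp
qed

lemma involution_perfect_matching:
  assumes inv: "\<forall>x\<in>A. r x \<in> A \<and> r (r x) = x" and fixed: "\<forall>x\<in>A. r x = x \<longleftrightarrow> x = i"
    and "i \<in> A" and "c \<notin> A"
  shows "insert {i, c} ((\<lambda>x. {x, r x}) ` (A - {i})) \<in> perfect_matchings_on (insert c A)"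
    (is "insert ?e ?E \<in> _")
proof -
  have mate: "r x \<in> A" "r x \<noteq> i" "r x \<noteq> x" if "x \<in> A - {i}" for x
  proof -
    show "r x \<in> A" "r x \<noteq> x" using inv fixed that by auto
    show "r x \<noteq> i"
    proof
      assume "r x = i"
      then have "x = r i" using inv that by force
      then show False using fixed \<open>i \<in> A\<close> that by auto
    qed
  qed
  have orbits: "{x, r x} \<inter> {y, r y} = {}" if "x \<in> A" "y \<in> A" "{x, r x} \<noteq> {y, r y}" for x y
  proof (rule ccontr)
    assume "{x, r x} \<inter> {y, r y} \<noteq> {}"
    then have "x = y \<or> x = r y"
      using that(1,2) inv by auto metis
    then show False
      using inv that by (auto simp: doubleton_eq_iff)
  qed
  have avoid: "{x, r x} \<inter> {i, c} = {}" if "x \<in> A - {i}" for x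
    using mate[OF that] that \<open>c \<notin> A\<close> by auto
  have "\<forall>e\<in>insert ?e ?E. e \<subseteq> insert c A \<and> card e = 2"
    using \<open>i \<in> A\<close> \<open>c \<notin> A\<close> mate by (auto simp: card_2_iff) blast
  moreover have "e \<inter> f = {}" if "e \<in> insert ?e ?E" "f \<in> insert ?e ?E" "e \<noteq> f" for e f
    using that orbits avoid by (auto simp: Int_commute)
  moreover have "\<Union>(insert ?e ?E) = insert c A"
    using \<open>i \<in> A\<close> mate by auto
  ultimately show ?thesis
    unfolding perfect_matchings_on_def by blast
qed

lemma card_disjoint_perfect_matchings_le:
  assumes "finite V" "a \<in> V" "C \<subseteq> perfect_matchings_on V"
    and disjoint: "\<forall>M\<in>C. \<forall>N\<in>C. M \<noteq> N \<longrightarrow> M \<inter> N = {}"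
  shows "card C \<le> card V - 1"
proof -
  define partner where "partner M = (SOME b. b \<in> V - {a} \<and> {a, b} \<in> M)" for M
  have partner: "partner M \<in> V - {a}" "{a, partner M} \<in> M" if "M \<in> C" for M
  proof -
    have "\<exists>b. b \<in> V - {a} \<and> {a, b} \<in> M"
      using perfect_matching_partner[of M V a] that assms(2,3) by blast
    then show "partner M \<in> V - {a}" "{a, partner M} \<in> M"
      unfolding partner_def by (metis (mono_tags, lifting) someI_ex)+
  qed
  have "inj_on partner C"
  proof (rule inj_onI)
    fix M N assume "M \<in> C" "N \<in> C" "partner M = partner N"
    then have "{a, partner M} \<in> M \<inter> N"
      using partner(2)[of M] partner(2)[of N] by simp
    then show "M = N" using disjoint \<open>M \<in> C\<close> \<open>N \<in> C\<close> by blast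
  qed
  then have "card C \<le> card (V - {a})"
    using partner(1) assms(1) by (intro card_inj_on_le) auto
  then show ?thesis using assms(2) by simp
qed

lemma pm_act_comp: "pm_act (\<sigma> \<circ> \<tau>) M = pm_act \<sigma> (pm_act \<tau> M)"
  by (auto simp: pm_act_def image_comp)

lemma pm_act_id: "pm_act id M = M"
  by (simp add: pm_act_def)

lemma pm_act_cong: "(\<And>x. x \<in> \<Union>M \<Longrightarrow> \<sigma> x = \<tau> x) \<Longrightarrow> pm_act \<sigma> M = pm_act \<tau> M"
  unfolding pm_act_def by (intro image_cong refl) auto

lemma pm_act_insert: "pm_act \<sigma> (insert e M) = insert (\<sigma> ` e) (pm_act \<sigma> M)"
  by (simp add: pm_act_def)

lemma inj_image: "inj f \<Longrightarrow> inj (image f)"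
  by (meson inj_image_eq_iff injI)

lemma pm_act_Int: "inj \<sigma> \<Longrightarrow> pm_act \<sigma> (M \<inter> N) = pm_act \<sigma> M \<inter> pm_act \<sigma> N"
  unfolding pm_act_def by (intro image_Int inj_image)

lemma pm_act_disjoint_iff: "inj \<sigma> \<Longrightarrow> pm_act \<sigma> M \<inter> pm_act \<sigma> N = {} \<longleftrightarrow> M \<inter> N = {}"
  by (metis pm_act_Int image_is_empty pm_act_def)

lemma pm_act_in_perfect_matchings_on:
  assumes "inj_on \<sigma> V" and "M \<in> perfect_matchings_on V"
  shows "pm_act \<sigma> M \<in> perfect_matchings_on (\<sigma> ` V)"
proof -
  have edges: "\<forall>e\<in>M. e \<subseteq> V \<and> card e = 2" and "\<Union>M = V"
    and disjoint: "\<forall>e\<in>M. \<forall>f\<in>M. e \<noteq> f \<longrightarrow> e \<inter> f = {}"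
    using assms(2) by (simp_all add: perfect_matchings_on_def)
  have "\<sigma> ` e \<inter> \<sigma> ` f = {}" if "e \<in> M" "f \<in> M" "\<sigma> ` e \<noteq> \<sigma> ` f" for e f
  proof -
    have "\<sigma> ` e \<inter> \<sigma> ` f = \<sigma> ` (e \<inter> f)"
      using assms(1) edges that(1,2) by (intro inj_on_image_Int[symmetric]) auto
    also have "e \<inter> f = {}"
      using disjoint that by auto
    finally show ?thesis by simp
  qed
  moreover have "\<forall>e\<in>M. \<sigma> ` e \<subseteq> \<sigma> ` V \<and> card (\<sigma> ` e) = 2"
    using assms(1) edges by (auto simp: card_image inj_on_subset)
  ultimately show ?thesis
    using \<open>\<Union>M = V\<close> by (auto simp: perfect_matchings_on_def pm_act_def)
qed

lemma pm_act_perfect_matchings: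
  assumes "\<sigma> permutes {0..<2*k}" "M \<in> perfect_matchings k"
  shows "pm_act \<sigma> M \<in> perfect_matchings k"
  using pm_act_in_perfect_matchings_on[OF permutes_inj_on[OF assms(1)], where V = "{0..<2*k}"] assms
    permutes_image[OF assms(1)]
  by (simp add: perfect_matchings_eq_perfect_matchings_on)

lemma pm_automorphism_pm_act:
  assumes "\<sigma> permutes {0..<2*k}"
  shows "pm_automorphism k (pm_act \<sigma>)"
proof -
  have inverse: "pm_act (inv \<sigma>) (pm_act \<sigma> M) = M" "pm_act \<sigma> (pm_act (inv \<sigma>) M) = M" for M
    by (simp_all add: pm_act_comp[symmetric] permutes_inv_o[OF assms] pm_act_id)
  have "bij_betw (pm_act \<sigma>) (perfect_matchings k) (perfect_matchings k)"
    by (rule bij_betw_byWitness[where f' = "pm_act (inv \<sigma>)"])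
      (use inverse pm_act_perfect_matchings assms permutes_inv[OF assms] in auto)
  then show ?thesis
    using pm_act_disjoint_iff[OF permutes_inj[OF assms]] by (simp add: pm_automorphism_def pm_adj_def)
qed

lemma perfect_matchings_on_transfer:
  "finite V \<Longrightarrow> finite W \<Longrightarrow> card V = 2 * m \<Longrightarrow> card W = 2 * m \<Longrightarrow>
    M \<in> perfect_matchings_on V \<Longrightarrow> N \<in> perfect_matchings_on W \<Longrightarrow>
    \<exists>\<sigma>. \<sigma> ` V = W \<and> pm_act \<sigma> M = N"
proof (induction m arbitrary: V W M N)
  case 0
  then show ?case by (simp add: perfect_matchings_on_empty pm_act_def)
next
  case (Suc m)
  obtain a c where "a \<in> V" "c \<in> W"
    using Suc.prems(3,4) by fastforce
  then obtain b d where ab: "b \<in> V - {a}" "{a, b} \<in> M" and cd: "d \<in> W - {c}" "{c, d} \<in> N"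
    using perfect_matching_partner Suc.prems(5,6) by metis
  have "card (V - {a, b}) = 2 * m" "card (W - {c, d}) = 2 * m"
    using Suc.prems(3,4) \<open>a \<in> V\<close> \<open>c \<in> W\<close> ab(1) cd(1) by (auto simp: card_Diff_subset)
  then obtain \<sigma> where \<sigma>: "\<sigma> ` (V - {a, b}) = W - {c, d}" "pm_act \<sigma> (M - {{a, b}}) = N - {{c, d}}"
    using Suc.IH Suc.prems perfect_matching_remove_edge ab(2) cd(2) by (metis finite_Diff)
  define \<tau> where "\<tau> = \<sigma>(a := c, b := d)"
  have "\<tau> ` V = W"
  proof -
    have "V = insert a (insert b (V - {a, b}))"
      using \<open>a \<in> V\<close> ab(1) by auto
    then have "\<tau> ` V = insert (\<tau> a) (insert (\<tau> b) (\<tau> ` (V - {a, b})))"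
      by (metis image_insert)
    moreover have "\<tau> a = c" "\<tau> b = d" "\<tau> ` (V - {a, b}) = \<sigma> ` (V - {a, b})"
      using ab(1) by (auto simp: \<tau>_def)
    ultimately show ?thesis
      using \<sigma>(1) \<open>c \<in> W\<close> cd(1) by auto
  qed
  moreover have "pm_act \<tau> M = N"
  proof -
    have "\<Union>(M - {{a, b}}) = V - {a, b}"
      using perfect_matching_remove_edge[OF Suc.prems(5) ab(2)] by (simp add: perfect_matchings_on_def)
    then have "pm_act \<tau> (M - {{a, b}}) = pm_act \<sigma> (M - {{a, b}})"
      by (intro pm_act_cong) (auto simp: \<tau>_def)
    moreover have "M = insert {a, b} (M - {{a, b}})" "N = insert {c, d} (N - {{c, d}})"
      using ab(2) cd(2) by auto
    moreover have "\<tau> ` {a, b} = {c, d}"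
      using ab(1) by (auto simp: \<tau>_def)
    ultimately show ?thesis
      using \<sigma>(2) by (metis pm_act_insert)
  qed
  ultimately show ?case by blast
qed

lemma perfect_matchings_on_transitive:
  assumes "finite V" "M \<in> perfect_matchings_on V" "N \<in> perfect_matchings_on V"
  shows "\<exists>\<sigma>. \<sigma> permutes V \<and> pm_act \<sigma> M = N"
proof -
  obtain \<sigma> where \<sigma>: "\<sigma> ` V = V" "pm_act \<sigma> M = N"
    using perfect_matchings_on_transfer assms card_perfect_matching by metis
  then have "restrict_id \<sigma> V permutes V"
    using assms(1) by (intro permutes_restrict_id) (simp add: bij_betw_def eq_card_imp_inj_on)
  moreover have "pm_act (restrict_id \<sigma> V) M = pm_act \<sigma> M"
    using assms(2) by (intro pm_act_cong) (auto simp: perfect_matchings_on_def)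
  ultimately show ?thesis
    using \<sigma>(2) by metis
qed

section \<open>The round-robin 1-factorisation\<close>

(* Only applied to \<open>x < n\<close>, where the subtraction does not truncate. *)
definition round_robin_mate :: "nat \<Rightarrow> nat \<Rightarrow> nat \<Rightarrow> nat" where
  "round_robin_mate n i x = (2 * i + n - x) mod n"

definition round_robin :: "nat \<Rightarrow> nat \<Rightarrow> nat set set" where
  "round_robin n i = insert {i, n} ((\<lambda>x. {x, round_robin_mate n i x}) ` ({..<n} - {i}))"

lemma round_robin_mate_less: "0 < n \<Longrightarrow> round_robin_mate n i x < n"
  by (simp add: round_robin_mate_def)

lemma round_robin_mate_eq_iff:
  assumes "x < n" "y < n"
  shows "round_robin_mate n i x = y \<longleftrightarrow> [x + y = 2 * i] (mod n)"
proof -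
  have "round_robin_mate n i x = y \<longleftrightarrow> [2 * i + n - x = y] (mod n)"
    using assms round_robin_mate_less[of n i x]
    by (auto simp: round_robin_mate_def cong_def intro: cong_less_modulus_unique_nat)
  also have "\<dots> \<longleftrightarrow> [x + (2 * i + n - x) = x + y] (mod n)"
    by (simp only: cong_add_lcancel_nat)
  also have "\<dots> \<longleftrightarrow> [2 * i + n = x + y] (mod n)"
    using assms by simp
  also have "\<dots> \<longleftrightarrow> [x + y = 2 * i] (mod n)"
    by (simp add: cong_sym_eq cong_def)
  finally show ?thesis .
qed

lemma round_robin_mate_cong: "x < n \<Longrightarrow> [x + round_robin_mate n i x = 2 * i] (mod n)"
  using round_robin_mate_eq_iff[of x n "round_robin_mate n i x"] round_robin_mate_less[of n i x] by blast

lemma round_robin_mate_involutive: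
  "x < n \<Longrightarrow> round_robin_mate n i (round_robin_mate n i x) = x"
  using round_robin_mate_eq_iff[of "round_robin_mate n i x" n x] round_robin_mate_less[of n i x]
    round_robin_mate_cong[of x n i]
  by (simp add: add.commute)

lemma round_robin_mate_fixed_iff:
  assumes "odd n" "x < n" "i < n"
  shows "round_robin_mate n i x = x \<longleftrightarrow> x = i"
proof -
  have "coprime 2 n" using assms(1) by simp
  then have "[2 * x = 2 * i] (mod n) \<longleftrightarrow> x = i"
    using assms(2,3) by (auto simp: cong_mult_lcancel_nat intro: cong_less_modulus_unique_nat)
  then show ?thesis
    using round_robin_mate_eq_iff[OF assms(2,2)] by (simp add: mult_2)
qed

lemma round_robin_perfect:
  assumes "odd n" "i < n"
  shows "round_robin n i \<in> perfect_matchings_on (insert n {..<n})"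
  unfolding round_robin_def
  using assms round_robin_mate_less[of n i] round_robin_mate_involutive[of _ n i]
    round_robin_mate_fixed_iff[OF assms(1) _ assms(2)]
  by (intro involution_perfect_matching) auto

lemma round_robin_edge_cases:
  assumes "e \<in> round_robin n i" "0 < n"
  obtains "e = {i, n}" | x y where "e = {x, y}" "x < n" "y < n" "[x + y = 2 * i] (mod n)"
proof -
  consider "e = {i, n}" | x where "x < n" "e = {x, round_robin_mate n i x}"
    using assms(1) by (auto simp: round_robin_def)
  then show ?thesis
    using that round_robin_mate_less[OF assms(2)] round_robin_mate_cong by cases blast+
qed

lemma round_robin_disjoint:
  assumes "odd n" "i < n" "j < n" "i \<noteq> j"
  shows "round_robin n i \<inter> round_robin n j = {}"
proof (rule ccontr)
  assume "round_robin n i \<inter> round_robin n j \<noteq> {}"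
  then obtain e where e: "e \<in> round_robin n i" "e \<in> round_robin n j" by blast
  have "0 < n" using assms by auto
  have "[2 * i = 2 * j] (mod n)"
  proof (cases "n \<in> e")
    case True
    have "e = {i, n}"
      using True by (cases rule: round_robin_edge_cases[OF e(1) \<open>0 < n\<close>]) auto
    moreover have "e = {j, n}"
      using True by (cases rule: round_robin_edge_cases[OF e(2) \<open>0 < n\<close>]) auto
    ultimately show ?thesis
      using assms by (auto simp: doubleton_eq_iff)
  next
    case False
    obtain x y where xy: "e = {x, y}" "[x + y = 2 * i] (mod n)"
      using False by (cases rule: round_robin_edge_cases[OF e(1) \<open>0 < n\<close>]) auto
    obtain x' y' where xy': "e = {x', y'}" "[x' + y' = 2 * j] (mod n)"
      using False by (cases rule: round_robin_edge_cases[OF e(2) \<open>0 < n\<close>]) auto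
    have "x + y = x' + y'"
      using xy(1) xy'(1) by (auto simp: doubleton_eq_iff)
    then show ?thesis
      using xy(2) xy'(2) by (metis cong_sym cong_trans)
  qed
  moreover have "coprime 2 n" using assms(1) by simp
  ultimately show False
    using assms(2-4) by (simp add: cong_mult_lcancel_nat cong_less_modulus_unique_nat)
qed

lemma pm_transitive_permutation_action:
  "transitive_permutation_action {0..<2*k} (perfect_matchings k) pm_act"
proof
  show "finite (perfect_matchings k)"
    by (simp add: perfect_matchings_eq_perfect_matchings_on finite_perfect_matchings_on)
  show "\<exists>\<sigma>. \<sigma> permutes {0..<2*k} \<and> pm_act \<sigma> M = N"
    if "M \<in> perfect_matchings k" "N \<in> perfect_matchings k" for M N
    using perfect_matchings_on_transitive that by (simp add: perfect_matchings_eq_perfect_matchings_on)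
qed (simp_all add: pm_act_comp pm_act_id pm_act_perfect_matchings)

lemma pm_clique_exists:
  assumes "k \<ge> 1"
  shows "\<exists>C. pm_clique k C \<and> card C = 2*k - 1"
proof -
  define n where "n = 2*k - 1"
  have n: "odd n" "insert n {..<n} = {0..<2*k}"
    using assms by (auto simp: n_def)
  have "inj_on (round_robin n) {..<n}"
  proof (rule inj_onI)
    fix i j assume "i \<in> {..<n}" "j \<in> {..<n}" "round_robin n i = round_robin n j"
    moreover have "{i, n} \<in> round_robin n i"
      by (simp add: round_robin_def)
    ultimately show "i = j"
      using round_robin_disjoint[OF n(1), of i j] by auto
  qed
  moreover have "pm_clique k (round_robin n ` {..<n})"
    using round_robin_perfect[OF n(1)] round_robin_disjoint[OF n(1)]
    by (auto simp: pm_clique_def pm_adj_def perfect_matchings_eq_perfect_matchings_on n(2)[symmetric])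
  ultimately show ?thesis
    by (metis card_image card_lessThan n_def)
qed

lemma pm_clique_card_le: "pm_clique k C \<Longrightarrow> k \<ge> 1 \<Longrightarrow> card C \<le> 2*k - 1"
  using card_disjoint_perfect_matchings_le[of "{0..<2*k}" 0 C]
  by (simp add: pm_clique_def pm_adj_def perfect_matchings_eq_perfect_matchings_on)

lemma pm_coclique_exists:
  assumes "k \<ge> 1"
  shows "\<exists>C. pm_coclique k C \<and> card C = dfact (2*k - 3)"
proof -
  define C where "C = {M \<in> perfect_matchings_on {0..<2*k}. {0, 1} \<in> M}"
  have "pm_coclique k C"
    by (auto simp: pm_coclique_def pm_adj_def perfect_matchings_eq_perfect_matchings_on C_def)
  moreover have "card ({0..<2*k} - {0, 1}) = 2 * (k - 1)"
    using assms by (simp add: card_Diff_subset)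
  then have "card C = dfact (2*k - 3)"
    using assms card_perfect_matchings_containing[of 0 "{0..<2*k}" 1]
      card_perfect_matchings_on[of "{0..<2*k} - {0, 1}" "k - 1"]
    by (simp add: C_def numeral_3_eq_3 right_diff_distrib')
  ultimately show ?thesis by blast
qed

lemma dfact_twice_minus_one: "k \<ge> 1 \<Longrightarrow> dfact (2*k - 1) = (2*k - 1) * dfact (2*k - 3)"
  using dfact_Suc_double[of "k - 1"] by (cases k) (simp_all add: numeral_3_eq_3)

lemma pm_coclique_card_le:
  assumes "k \<ge> 1" "pm_coclique k S"
  shows "card S \<le> dfact (2*k - 3)"
proof -
  obtain F where F: "pm_clique k F" "card F = 2*k - 1"
    using pm_clique_exists[OF assms(1)] by blast
  have "card F * card S \<le> card (perfect_matchings k)"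
  proof (rule transitive_permutation_action.clique_times_coclique_le
      [OF pm_transitive_permutation_action, where adj = pm_adj])
    show "pm_adj (pm_act \<sigma> M) (pm_act \<sigma> N)" if "\<sigma> permutes {0..<2*k}" "pm_adj M N" for \<sigma> M N
      using that pm_act_disjoint_iff[OF permutes_inj[OF that(1)]] by (simp add: pm_adj_def)
  qed (use F(1) assms(2) in \<open>auto simp: pm_clique_def pm_coclique_def\<close>)
  also have "card (perfect_matchings k) = (2*k - 1) * dfact (2*k - 3)"
    using card_perfect_matchings_on[of "{0..<2*k}" k] dfact_twice_minus_one[OF assms(1)]
    by (simp add: perfect_matchings_eq_perfect_matchings_on)
  finally show ?thesis
    using F(2) assms(1) by simp
qed

theorem theorem3p3:
  fixes k :: nat
  assumes "k \<ge> 1"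
  shows "vertex_transitive_pm k
    \<and> (\<forall>\<sigma>. \<sigma> permutes {0..<2*k} \<longrightarrow> pm_automorphism k (pm_act \<sigma>))
    \<and> (\<forall>M\<in>perfect_matchings k. \<forall>N\<in>perfect_matchings k.
          \<exists>\<sigma>. \<sigma> permutes {0..<2*k} \<and> pm_act \<sigma> M = N)
    \<and> (\<exists>C. pm_clique k C \<and> card C = 2*k - 1)
    \<and> (\<forall>C. pm_clique k C \<longrightarrow> card C \<le> 2*k - 1)
    \<and> (\<exists>C. pm_coclique k C \<and> card C = dfact (2*k - 3))
    \<and> (\<forall>C. pm_coclique k C \<longrightarrow> card C \<le> dfact (2*k - 3))"
proof -
  have automorphisms: "\<forall>\<sigma>. \<sigma> permutes {0..<2*k} \<longrightarrow> pm_automorphism k (pm_act \<sigma>)"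
    using pm_automorphism_pm_act by blast
  have transitive: "\<forall>M\<in>perfect_matchings k. \<forall>N\<in>perfect_matchings k.
      \<exists>\<sigma>. \<sigma> permutes {0..<2*k} \<and> pm_act \<sigma> M = N"
    using perfect_matchings_on_transitive by (simp add: perfect_matchings_eq_perfect_matchings_on)
  have "vertex_transitive_pm k"
    unfolding vertex_transitive_pm_def using automorphisms transitive by metis
  have "\<forall>C. pm_clique k C \<longrightarrow> card C \<le> 2*k - 1"
    using pm_clique_card_le assms by blast
  have "\<forall>C. pm_coclique k C \<longrightarrow> card C \<le> dfact (2*k - 3)"
    using pm_coclique_card_le[OF assms] by blast
  show ?thesis
    by (intro conjI pm_clique_exists[OF assms] pm_coclique_exists[OF assms]) fact+
qed

end
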